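(* Let $n,k$ be integers with $n\ge 97$ and $\frac{3n}{4}\le k\le n$. Let $M\in\mathcal{S}^{n,k}$ with $\|M\|_F=1$, and suppose $M$ is not positive semidefinite, with smallest eigenvalue $-\lambda_1<0$. Then $$\lambda_1\le\frac{96(n-k)}{n^{3/2}}.$$
   Context: For integers $2\le k\le n$, the $k$-PSD closure $\mathcal{S}^{n,k}$ is the set of all $n\times n$ real symmetric matrices all of whose $k\times k$ principal submatrices are positive semidefinite. $\|\cdot\|_F$ is the Frobenius norm. *)

theory Defs
  imports Complex_Main "Jordan_Normal_Form.Char_Poly" "Jordan_Normal_Form.DL_Submatrix"
begin

definition psd_mat :: "real mat \<Rightarrow> bool" where
  "psd_mat A \<longleftrightarrow> A \<in> carrier_mat (dim_row A) (dim_row A) \<and> transpose_mat A = A \<and>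
     (\<forall>x \<in> carrier_vec (dim_row A). 0 \<le> x \<bullet> (A *\<^sub>v x))"

definition k_psd_closure :: "nat \<Rightarrow> nat \<Rightarrow> real mat set" where
  "k_psd_closure n k = {M. M \<in> carrier_mat n n \<and> transpose_mat M = M \<and>
     (\<forall>S. S \<subseteq> {0..<n} \<and> card S = k \<longrightarrow> psd_mat (submatrix M S S))}"

definition frobenius_norm :: "real mat \<Rightarrow> real" where
  "frobenius_norm M = sqrt (\<Sum>i<dim_row M. \<Sum>j<dim_col M. (M $$ (i, j))\<^sup>2)"

end

theory Submission
  imports Defs
begin

text \<open>
  Let \<open>u\<close> be an eigenvector of \<open>M\<close> for the eigenvalue \<open>-\<lambda>\<close> and call an index heavy if
  \<open>M\<^sub>i\<^sub>i > \<tau> = 2 / sqrt n\<close>. As \<open>\<parallel>M\<parallel>\<^sub>F \<le> 1\<close>, there are \<open>h \<le> n / 4\<close> heavy indices,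
  forming \<open>H\<close>; let \<open>L\<close> be the light ones and \<open>m = k - h\<close>. For every \<open>m\<close>-subset \<open>R\<close> of \<open>L\<close>
  the principal submatrix on \<open>H \<union> R\<close> is PSD; testing it with \<open>\<alpha> u\<^sub>H + u\<^sub>R\<close>,
  \<open>\<alpha> = m / |L|\<close>, and averaging over all \<open>R\<close> gives
  \<open>0 \<le> \<alpha> (u\<^sub>H\<^sup>T M u\<^sub>H + 2 u\<^sub>H\<^sup>T M u\<^sub>L) + \<beta> u\<^sub>L\<^sup>T M u\<^sub>L + (1 - \<beta>) \<Sum>\<^sub>i\<^sub>\<in>\<^sub>L M\<^sub>i\<^sub>i u\<^sub>i\<^sup>2\<close>
  with \<open>\<beta> = (m - 1) / (|L| - 1)\<close>. The eigenvalue equation turns the block forms into multiples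
  of \<open>\<lambda>\<close>, and the light diagonal is at most \<open>\<tau>\<close>, whence \<open>(m - 1) \<lambda> \<le> (n - k) \<tau>\<close>;
  finally \<open>m - 1 \<ge> n / 48\<close>.
\<close>

lemma card_subsets_with_card_containing:
  assumes "finite L" "A \<subseteq> L" "card A \<le> m"
  shows "card {R. R \<subseteq> L \<and> card R = m \<and> A \<subseteq> R} = (card L - card A) choose (m - card A)"
proof -
  have fin: "finite A" using assms finite_subset by blast
  have "bij_betw (\<lambda>R. R - A) {R. R \<subseteq> L \<and> card R = m \<and> A \<subseteq> R} {R. R \<subseteq> L - A \<and> card R = m - card A}"
  proof (rule bij_betw_byWitness[where f' = "\<lambda>R. R \<union> A"])
    show "(\<lambda>R. R \<union> A) ` {R. R \<subseteq> L - A \<and> card R = m - card A} \<subseteq> {R. R \<subseteq> L \<and> card R = m \<and> A \<subseteq> R}"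
    proof clarify
      fix R assume "R \<subseteq> L - A" "card R = m - card A"
      moreover have "finite R" using \<open>R \<subseteq> L - A\<close> assms(1) finite_subset by blast
      moreover have "R \<inter> A = {}" using \<open>R \<subseteq> L - A\<close> by blast
      ultimately show "R \<union> A \<subseteq> L \<and> card (R \<union> A) = m \<and> A \<subseteq> R \<union> A"
        using assms fin by (auto simp: card_Un_disjoint)
    qed
  qed (use assms fin in \<open>auto simp: card_Diff_subset\<close>)
  then have "card {R. R \<subseteq> L \<and> card R = m \<and> A \<subseteq> R} = card {R. R \<subseteq> L - A \<and> card R = m - card A}"
    by (rule bij_betw_same_card)
  also have "\<dots> = (card L - card A) choose (m - card A)"
    using assms fin by (simp add: n_subsets card_Diff_subset)
  finally show ?thesis .
qed

lemma sum_family_sum_eq_sum_card: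
  fixes g :: "'a \<Rightarrow> 'b::comm_semiring_1"
  assumes "finite \<R>" "finite X" "\<And>R. R \<in> \<R> \<Longrightarrow> P R \<subseteq> X"
  shows "(\<Sum>R\<in>\<R>. \<Sum>x\<in>P R. g x) = (\<Sum>x\<in>X. of_nat (card {R \<in> \<R>. x \<in> P R}) * g x)"
proof -
  have "(\<Sum>R\<in>\<R>. \<Sum>x\<in>P R. g x) = (\<Sum>R\<in>\<R>. \<Sum>x | x \<in> X \<and> x \<in> P R. g x)"
  proof (rule sum.cong[OF refl])
    fix R assume "R \<in> \<R>"
    then have "{x. x \<in> X \<and> x \<in> P R} = P R" using assms(3) by blast
    then show "(\<Sum>x\<in>P R. g x) = (\<Sum>x | x \<in> X \<and> x \<in> P R. g x)" by simp
  qed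
  also have "\<dots> = (\<Sum>x\<in>X. \<Sum>R | R \<in> \<R> \<and> x \<in> P R. g x)"
    using sum.swap_restrict[OF assms(1,2), of "\<lambda>_. g"] by simp
  finally show ?thesis by simp
qed

lemma sum_subsets_with_card_sum:
  fixes g :: "'a \<Rightarrow> 'b::comm_semiring_1"
  assumes "finite L" "1 \<le> m"
  shows "(\<Sum>R | R \<subseteq> L \<and> card R = m. \<Sum>x\<in>R. g x) = of_nat ((card L - 1) choose (m - 1)) * (\<Sum>x\<in>L. g x)"
proof -
  let ?\<R> = "{R. R \<subseteq> L \<and> card R = m}"
  have count: "card {R \<in> ?\<R>. x \<in> R} = (card L - 1) choose (m - 1)" if "x \<in> L" for x
  proof -
    have "{R \<in> ?\<R>. x \<in> R} = {R. R \<subseteq> L \<and> card R = m \<and> {x} \<subseteq> R}" by auto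
    then show ?thesis using card_subsets_with_card_containing[of L "{x}" m] assms that by simp
  qed
  have "(\<Sum>R\<in>?\<R>. \<Sum>x\<in>R. g x) = (\<Sum>x\<in>L. of_nat (card {R \<in> ?\<R>. x \<in> R}) * g x)"
    using assms(1) by (intro sum_family_sum_eq_sum_card) auto
  also have "\<dots> = (\<Sum>x\<in>L. of_nat ((card L - 1) choose (m - 1)) * g x)"
    by (intro sum.cong refl) (simp only: count)
  finally show ?thesis by (simp only: sum_distrib_left)
qed

lemma sum_subsets_with_card_double_sum:
  fixes g :: "'a \<Rightarrow> 'a \<Rightarrow> 'b::comm_ring_1"
  assumes "finite L" "2 \<le> m"
  shows "(\<Sum>R | R \<subseteq> L \<and> card R = m. \<Sum>x\<in>R. \<Sum>y\<in>R. g x y)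
    = of_nat ((card L - 2) choose (m - 2)) * (\<Sum>x\<in>L. \<Sum>y\<in>L. g x y)
      + (of_nat ((card L - 1) choose (m - 1)) - of_nat ((card L - 2) choose (m - 2))) * (\<Sum>x\<in>L. g x x)"
    (is "_ = ?N2 * _ + (?N1 - ?N2) * _")
proof -
  let ?\<R> = "{R. R \<subseteq> L \<and> card R = m}"
  have count: "of_nat (card {R \<in> ?\<R>. (x, y) \<in> R \<times> R}) = (if x = y then ?N1 else ?N2)"
    if "x \<in> L" "y \<in> L" for x y
  proof -
    have "{R \<in> ?\<R>. (x, y) \<in> R \<times> R} = {R. R \<subseteq> L \<and> card R = m \<and> {x, y} \<subseteq> R}" by auto
    moreover have "card {x, y} = (if x = y then 1 else 2)" by simp
    ultimately show ?thesis
      using card_subsets_with_card_containing[of L "{x, y}" m] assms that by auto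
  qed
  have "(\<Sum>R\<in>?\<R>. \<Sum>x\<in>R. \<Sum>y\<in>R. g x y) = (\<Sum>R\<in>?\<R>. \<Sum>p\<in>R \<times> R. case_prod g p)"
    by (simp add: sum.cartesian_product)
  also have "\<dots> = (\<Sum>p\<in>L \<times> L. of_nat (card {R \<in> ?\<R>. p \<in> R \<times> R}) * case_prod g p)"
    using assms by (intro sum_family_sum_eq_sum_card) auto
  also have "\<dots> = (\<Sum>x\<in>L. \<Sum>y\<in>L. of_nat (card {R \<in> ?\<R>. (x, y) \<in> R \<times> R}) * g x y)"
    unfolding sum.cartesian_product by (intro sum.cong refl) (simp add: case_prod_beta mem_Times_iff)
  also have "\<dots> = (\<Sum>x\<in>L. \<Sum>y\<in>L. ?N2 * g x y + (if x = y then (?N1 - ?N2) * g x y else 0))"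
  proof (intro sum.cong refl)
    fix x y assume "x \<in> L" "y \<in> L"
    then show "of_nat (card {R \<in> ?\<R>. (x, y) \<in> R \<times> R}) * g x y
        = ?N2 * g x y + (if x = y then (?N1 - ?N2) * g x y else 0)"
      by (simp only: count) (simp add: left_diff_distrib)
  qed
  also have "\<dots> = ?N2 * (\<Sum>x\<in>L. \<Sum>y\<in>L. g x y) + (?N1 - ?N2) * (\<Sum>x\<in>L. g x x)"
    using assms(1) by (simp add: sum.distrib sum_distrib_left)
  finally show ?thesis .
qed

lemma real_choose_diff_one_eq:
  assumes "0 < m" "0 < l"
  shows "real ((l - 1) choose (m - 1)) = real m / real l * real (l choose m)"
  using times_binomial_minus1_eq[OF assms(1), of l] assms(2)
  by (simp add: field_simps flip: of_nat_mult)

definition block_form :: "('a \<Rightarrow> 'a \<Rightarrow> 'b::comm_semiring_1) \<Rightarrow> ('a \<Rightarrow> 'b) \<Rightarrow> 'a set \<Rightarrow> 'a set \<Rightarrow> 'b" where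
  "block_form f u S T = (\<Sum>i\<in>S. \<Sum>j\<in>T. u i * f i j * u j)"

lemma block_form_commute:
  assumes "\<And>i j. i \<in> S \<Longrightarrow> j \<in> T \<Longrightarrow> f i j = f j i"
  shows "block_form f u S T = block_form f u T S"
  unfolding block_form_def by (subst sum.swap) (intro sum.cong refl; simp add: assms mult_ac)

lemma block_form_Un_left:
  assumes "finite S\<^sub>1" "finite S\<^sub>2" "S\<^sub>1 \<inter> S\<^sub>2 = {}"
  shows "block_form f u (S\<^sub>1 \<union> S\<^sub>2) T = block_form f u S\<^sub>1 T + block_form f u S\<^sub>2 T"
  unfolding block_form_def using assms by (rule sum.union_disjoint)

lemma block_form_Un_right:
  assumes "finite T\<^sub>1" "finite T\<^sub>2" "T\<^sub>1 \<inter> T\<^sub>2 = {}"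
  shows "block_form f u S (T\<^sub>1 \<union> T\<^sub>2) = block_form f u S T\<^sub>1 + block_form f u S T\<^sub>2"
  unfolding block_form_def using assms by (simp add: sum.union_disjoint sum.distrib)

lemma block_form_scale:
  assumes "\<And>i. i \<in> S \<Longrightarrow> w i = a * u i" "\<And>j. j \<in> T \<Longrightarrow> w j = b * u j"
  shows "block_form f w S T = a * b * block_form f u S T"
  unfolding block_form_def using assms by (simp add: sum_distrib_left mult_ac)

lemma block_form_two_blocks:
  assumes "finite H" "finite R" "H \<inter> R = {}"
    and "\<And>i j. i \<in> H \<Longrightarrow> j \<in> R \<Longrightarrow> f i j = f j i"
  shows "block_form f (\<lambda>i. if i \<in> H then a * u i else b * u i) (H \<union> R) (H \<union> R)
    = a\<^sup>2 * block_form f u H H + 2 * a * b * block_form f u H R + b\<^sup>2 * block_form f u R R"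
proof -
  let ?w = "\<lambda>i. if i \<in> H then a * u i else b * u i"
  have w_R: "?w i = b * u i" if "i \<in> R" for i using that assms(3) by auto
  have "block_form f ?w (H \<union> R) (H \<union> R)
      = block_form f ?w H H + block_form f ?w R H + (block_form f ?w H R + block_form f ?w R R)"
    using assms(1-3) by (simp add: block_form_Un_left block_form_Un_right)
  also have "\<dots> = a * a * block_form f u H H + b * a * block_form f u R H
      + (a * b * block_form f u H R + b * b * block_form f u R R)"
    by (simp add: block_form_scale w_R)
  also have "block_form f u R H = block_form f u H R"
    using assms(4) by (intro block_form_commute) auto
  finally show ?thesis by (simp add: power2_eq_square mult_2 distrib_left add_ac mult_ac)
qed

lemma block_form_eigenvector:
  assumes "\<And>i. i \<in> S \<Longrightarrow> (\<Sum>j\<in>T. f i j * u j) = \<mu> * u i"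
  shows "block_form f u S T = \<mu> * (\<Sum>i\<in>S. (u i)\<^sup>2)"
proof -
  have "block_form f u S T = (\<Sum>i\<in>S. u i * (\<Sum>j\<in>T. f i j * u j))"
    unfolding block_form_def by (simp add: sum_distrib_left mult_ac)
  also have "\<dots> = (\<Sum>i\<in>S. \<mu> * (u i)\<^sup>2)"
  proof (rule sum.cong[OF refl])
    fix i assume "i \<in> S"
    then have "(\<Sum>j\<in>T. f i j * u j) = \<mu> * u i" by (rule assms)
    then show "u i * (\<Sum>j\<in>T. f i j * u j) = \<mu> * (u i)\<^sup>2" by (simp add: power2_eq_square mult_ac)
  qed
  finally show ?thesis by (simp add: sum_distrib_left)
qed

lemma sum_subsets_with_card_block_form_cross:
  assumes "finite L" "1 \<le> m"
  shows "(\<Sum>R | R \<subseteq> L \<and> card R = m. block_form f u H R)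
    = of_nat ((card L - 1) choose (m - 1)) * block_form f u H L"
proof -
  have "block_form f u H R = (\<Sum>j\<in>R. \<Sum>i\<in>H. u i * f i j * u j)" for R
    unfolding block_form_def by (rule sum.swap)
  then show ?thesis
    using sum_subsets_with_card_sum[OF assms, of "\<lambda>j. \<Sum>i\<in>H. u i * f i j * u j"] by simp
qed

lemma sum_subsets_with_card_block_form_diag:
  fixes f :: "'a \<Rightarrow> 'a \<Rightarrow> 'b::comm_ring_1"
  assumes "finite L" "2 \<le> m"
  shows "(\<Sum>R | R \<subseteq> L \<and> card R = m. block_form f u R R)
    = of_nat ((card L - 2) choose (m - 2)) * block_form f u L L
      + (of_nat ((card L - 1) choose (m - 1)) - of_nat ((card L - 2) choose (m - 2)))
        * (\<Sum>i\<in>L. f i i * (u i)\<^sup>2)"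
  using sum_subsets_with_card_double_sum[OF assms, of "\<lambda>i j. u i * f i j * u j"]
  by (simp add: block_form_def power2_eq_square mult_ac)

lemma averaged_test_inequality:
  fixes f :: "'a \<Rightarrow> 'a \<Rightarrow> real"
  assumes fin: "finite H" "finite L" "H \<inter> L = {}"
    and sym: "\<And>i j. i \<in> H \<Longrightarrow> j \<in> L \<Longrightarrow> f i j = f j i"
    and psd: "\<And>R w. R \<subseteq> L \<Longrightarrow> card R = m \<Longrightarrow> 0 \<le> block_form f w (H \<union> R) (H \<union> R)"
    and m: "2 \<le> m" "m \<le> card L"
  defines "\<alpha> \<equiv> real m / real (card L)" and "\<beta> \<equiv> (real m - 1) / (real (card L) - 1)"
  shows "0 \<le> \<alpha> * (block_form f u H H + 2 * block_form f u H L) + \<beta> * block_form f u L L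
    + (1 - \<beta>) * (\<Sum>i\<in>L. f i i * (u i)\<^sup>2)"
proof -
  let ?\<R> = "{R. R \<subseteq> L \<and> card R = m}" and ?l = "card L"
  define N0 N1 N2 where "N0 = real (?l choose m)" and "N1 = real ((?l - 1) choose (m - 1))"
    and "N2 = real ((?l - 2) choose (m - 2))"
  have N1: "N1 = \<alpha> * N0"
    using real_choose_diff_one_eq[of m ?l] m unfolding N0_def N1_def \<alpha>_def by simp
  have N2: "N2 = \<beta> * N1"
    using real_choose_diff_one_eq[of "m - 1" "?l - 1"] m unfolding N1_def N2_def \<beta>_def
    by (simp add: numeral_2_eq_2)
  have test: "0 \<le> \<alpha>\<^sup>2 * block_form f u H H + 2 * \<alpha> * block_form f u H R + block_form f u R R"
    if "R \<in> ?\<R>" for R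
  proof -
    have R: "R \<subseteq> L" "card R = m" "finite R" using that fin(2) finite_subset by auto
    have "0 \<le> block_form f (\<lambda>i. if i \<in> H then \<alpha> * u i else 1 * u i) (H \<union> R) (H \<union> R)"
      using R by (intro psd)
    also have "\<dots> = \<alpha>\<^sup>2 * block_form f u H H + 2 * \<alpha> * block_form f u H R + block_form f u R R"
      using R fin sym by (subst block_form_two_blocks) auto
    finally show ?thesis .
  qed
  have "0 \<le> (\<Sum>R\<in>?\<R>. \<alpha>\<^sup>2 * block_form f u H H + 2 * \<alpha> * block_form f u H R + block_form f u R R)"
    using test by (rule sum_nonneg)
  also have "\<dots> = N0 * \<alpha>\<^sup>2 * block_form f u H H + 2 * \<alpha> * N1 * block_form f u H L
      + N2 * block_form f u L L + (N1 - N2) * (\<Sum>i\<in>L. f i i * (u i)\<^sup>2)"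
    using fin(2) m
    by (simp add: sum.distrib sum_distrib_left[symmetric] sum_subsets_with_card_block_form_cross
        sum_subsets_with_card_block_form_diag N0_def N1_def N2_def n_subsets)
  also have "\<dots> = N0 * \<alpha> * (\<alpha> * (block_form f u H H + 2 * block_form f u H L) + \<beta> * block_form f u L L
      + (1 - \<beta>) * (\<Sum>i\<in>L. f i i * (u i)\<^sup>2))" (is "_ = N0 * \<alpha> * ?average")
    by (simp add: N1 N2 power2_eq_square algebra_simps)
  finally have "0 \<le> N0 * \<alpha> * ?average" .
  moreover have "0 < N0 * \<alpha>"
    using m unfolding N0_def \<alpha>_def by simp
  ultimately show ?thesis by (simp add: zero_le_mult_iff)
qed

lemma eigenvalue_bound_from_test_inequality:
  fixes \<alpha> \<beta> lam \<tau> a b q\<^sub>H\<^sub>H q\<^sub>H\<^sub>L q\<^sub>L\<^sub>L d :: real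
  assumes test: "0 \<le> \<alpha> * (q\<^sub>H\<^sub>H + 2 * q\<^sub>H\<^sub>L) + \<beta> * q\<^sub>L\<^sub>L + (1 - \<beta>) * d"
    and eig: "q\<^sub>H\<^sub>H + q\<^sub>H\<^sub>L = - lam * a" "q\<^sub>H\<^sub>L + q\<^sub>L\<^sub>L = - lam * b"
    and "0 \<le> q\<^sub>H\<^sub>H" "d \<le> \<tau> * b"
    and "\<beta> \<le> \<alpha>" "\<beta> \<le> 1" "0 \<le> lam" "0 \<le> a" "0 \<le> b" "0 \<le> \<tau>" "0 < a + b"
  shows "\<beta> * lam \<le> (1 - \<beta>) * \<tau>"
proof -
  have q\<^sub>H\<^sub>L: "q\<^sub>H\<^sub>L = - lam * a - q\<^sub>H\<^sub>H" and q\<^sub>L\<^sub>L: "q\<^sub>L\<^sub>L = - lam * b + lam * a + q\<^sub>H\<^sub>H"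
    using eig by linarith+
  note test
  also have "\<alpha> * (q\<^sub>H\<^sub>H + 2 * q\<^sub>H\<^sub>L) + \<beta> * q\<^sub>L\<^sub>L + (1 - \<beta>) * d
      = (\<beta> - \<alpha>) * q\<^sub>H\<^sub>H + (\<beta> - 2 * \<alpha>) * (lam * a) - \<beta> * (lam * b) + (1 - \<beta>) * d"
    unfolding q\<^sub>H\<^sub>L q\<^sub>L\<^sub>L by (simp add: algebra_simps)
  also have "\<dots> \<le> - \<beta> * (lam * a) - \<beta> * (lam * b) + (1 - \<beta>) * (\<tau> * (a + b))"
  proof -
    have "(\<beta> - \<alpha>) * q\<^sub>H\<^sub>H \<le> 0" using assms by (simp add: mult_nonpos_nonneg)
    moreover have "(\<beta> - 2 * \<alpha>) * (lam * a) \<le> - \<beta> * (lam * a)" using assms by (intro mult_right_mono) auto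
    moreover have "d \<le> \<tau> * (a + b)" using assms by (smt (verit) distrib_left mult_nonneg_nonneg)
    then have "(1 - \<beta>) * d \<le> (1 - \<beta>) * (\<tau> * (a + b))" using assms by (intro mult_left_mono) auto
    ultimately show ?thesis by linarith
  qed
  also have "\<dots> = ((1 - \<beta>) * \<tau> - \<beta> * lam) * (a + b)"
    by (simp add: algebra_simps)
  finally show ?thesis
    using \<open>0 < a + b\<close> by (simp add: zero_le_mult_iff)
qed

lemma partition_eigenvalue_bound:
  fixes f :: "'a \<Rightarrow> 'a \<Rightarrow> real"
  assumes part: "finite H" "finite L" "H \<inter> L = {}"
    and sym: "\<And>i j. i \<in> H \<union> L \<Longrightarrow> j \<in> H \<union> L \<Longrightarrow> f i j = f j i"
    and eig: "\<And>i. i \<in> H \<union> L \<Longrightarrow> (\<Sum>j\<in>H \<union> L. f i j * u j) = - lam * u i"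
    and u_nz: "0 < (\<Sum>i\<in>H \<union> L. (u i)\<^sup>2)"
    and psd: "\<And>R w. R \<subseteq> L \<Longrightarrow> card R = m \<Longrightarrow> 0 \<le> block_form f w (H \<union> R) (H \<union> R)"
    and light: "\<And>i. i \<in> L \<Longrightarrow> f i i \<le> \<tau>"
    and m: "2 \<le> m" "m \<le> card L" and "0 \<le> lam" "0 \<le> \<tau>"
  shows "(real m - 1) * lam \<le> (real (card L) - real m) * \<tau>"
proof -
  define \<alpha> \<beta> where "\<alpha> = real m / real (card L)" and "\<beta> = (real m - 1) / (real (card L) - 1)"
  have sym_HL: "f i j = f j i" if "i \<in> H" "j \<in> L" for i j
    using that sym by blast
  have test: "0 \<le> \<alpha> * (block_form f u H H + 2 * block_form f u H L) + \<beta> * block_form f u L L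
      + (1 - \<beta>) * (\<Sum>i\<in>L. f i i * (u i)\<^sup>2)"
    unfolding \<alpha>_def \<beta>_def using part sym_HL psd m by (rule averaged_test_inequality)
  have eig_split: "block_form f u S H + block_form f u S L = - lam * (\<Sum>i\<in>S. (u i)\<^sup>2)"
    if "S \<subseteq> H \<union> L" for S
  proof -
    have "block_form f u S H + block_form f u S L = block_form f u S (H \<union> L)"
      using block_form_Un_right[OF part, of f u S] by simp
    also have "\<dots> = - lam * (\<Sum>i\<in>S. (u i)\<^sup>2)"
      using that eig by (intro block_form_eigenvector) auto
    finally show ?thesis .
  qed
  have "block_form f u L H = block_form f u H L"
    using sym_HL by (intro block_form_commute) auto
  then have eig_L: "block_form f u H L + block_form f u L L = - lam * (\<Sum>i\<in>L. (u i)\<^sup>2)"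
    using eig_split[of L] by simp
  obtain R where R: "R \<subseteq> L" "card R = m"
    using obtain_subset_with_card_n m(2) by metis
  have "0 \<le> block_form f (\<lambda>i. if i \<in> H then 1 * u i else 0 * u i) (H \<union> R) (H \<union> R)"
    using R by (rule psd)
  then have HH_nonneg: "0 \<le> block_form f u H H"
    using R part sym_HL finite_subset by (subst (asm) block_form_two_blocks) auto
  have diag_L: "(\<Sum>i\<in>L. f i i * (u i)\<^sup>2) \<le> \<tau> * (\<Sum>i\<in>L. (u i)\<^sup>2)"
    unfolding sum_distrib_left using light by (intro sum_mono mult_right_mono) auto
  have "0 < (\<Sum>i\<in>H. (u i)\<^sup>2) + (\<Sum>i\<in>L. (u i)\<^sup>2)"
    using u_nz part by (simp flip: sum.union_disjoint)
  moreover have "\<beta> \<le> \<alpha>" "\<beta> \<le> 1"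
    using m unfolding \<alpha>_def \<beta>_def by (auto simp: field_simps)
  ultimately have "\<beta> * lam \<le> (1 - \<beta>) * \<tau>"
    using eigenvalue_bound_from_test_inequality[OF test eig_split[of H] eig_L HH_nonneg diag_L]
      \<open>0 \<le> lam\<close> \<open>0 \<le> \<tau>\<close> by (simp add: sum_nonneg)
  moreover have l: "0 < real (card L) - 1"
    using m by simp
  ultimately have "(real (card L) - 1) * \<beta> * lam \<le> (real (card L) - 1) * (1 - \<beta>) * \<tau>"
    by (simp add: mult.assoc)
  moreover have "(real (card L) - 1) * \<beta> = real m - 1"
    and "(real (card L) - 1) * (1 - \<beta>) = real (card L) - real m"
    using l unfolding \<beta>_def by (simp_all add: field_simps)
  ultimately show ?thesis
    by simp
qed

lemma heavy_diagonal_eigenvalue_bound: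
  fixes f :: "'a \<Rightarrow> 'a \<Rightarrow> real"
  assumes X: "finite X"
    and sym: "\<And>i j. i \<in> X \<Longrightarrow> j \<in> X \<Longrightarrow> f i j = f j i"
    and eig: "\<And>i. i \<in> X \<Longrightarrow> (\<Sum>j\<in>X. f i j * u j) = - lam * u i"
    and u_nz: "0 < (\<Sum>i\<in>X. (u i)\<^sup>2)"
    and psd: "\<And>S w. S \<subseteq> X \<Longrightarrow> card S = k \<Longrightarrow> 0 \<le> block_form f w S S"
    and "0 \<le> lam" "0 \<le> \<tau>" "k \<le> card X"
    and heavy: "card {i \<in> X. \<tau> < f i i} + 2 \<le> k"
  shows "(real k - real (card {i \<in> X. \<tau> < f i i}) - 1) * lam \<le> (real (card X) - real k) * \<tau>"
proof -
  define H L where "H = {i \<in> X. \<tau> < f i i}" and "L = {i \<in> X. f i i \<le> \<tau>}"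
  have part: "finite H" "finite L" "H \<inter> L = {}" and X_eq: "X = H \<union> L"
    using X by (auto simp: H_def L_def)
  then have card_X: "card X = card H + card L"
    by (simp add: card_Un_disjoint)
  have psd_HR: "0 \<le> block_form f w (H \<union> R) (H \<union> R)" if "R \<subseteq> L" "card R = k - card H" for R w
  proof (rule psd)
    have "finite R" "H \<inter> R = {}" using that part finite_subset by blast+
    then show "card (H \<union> R) = k"
      using that part heavy[folded H_def] by (simp add: card_Un_disjoint)
  qed (use that X_eq in blast)
  have m: "2 \<le> k - card H" "k - card H \<le> card L"
    using heavy[folded H_def] \<open>k \<le> card X\<close> card_X by auto
  have light: "f i i \<le> \<tau>" if "i \<in> L" for i
    using that by (simp add: L_def)
  have "(real (k - card H) - 1) * lam \<le> (real (card L) - real (k - card H)) * \<tau>"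
    using partition_eigenvalue_bound[OF part sym[unfolded X_eq] eig[unfolded X_eq] u_nz[unfolded X_eq]
        psd_HR light m \<open>0 \<le> lam\<close> \<open>0 \<le> \<tau>\<close>] .
  then show ?thesis
    using m unfolding H_def[symmetric] card_X by (simp add: algebra_simps)
qed

lemma card_above_threshold_mult_sq_le:
  fixes d :: "'a \<Rightarrow> real"
  assumes "finite X" "0 \<le> \<tau>"
  shows "real (card {i \<in> X. \<tau> < d i}) * \<tau>\<^sup>2 \<le> (\<Sum>i\<in>X. (d i)\<^sup>2)"
proof -
  have "real (card {i \<in> X. \<tau> < d i}) * \<tau>\<^sup>2 = (\<Sum>i | i \<in> X \<and> \<tau> < d i. \<tau>\<^sup>2)"
    by simp
  also have "\<dots> \<le> (\<Sum>i | i \<in> X \<and> \<tau> < d i. (d i)\<^sup>2)"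
    using assms(2) by (intro sum_mono power_mono) auto
  also have "\<dots> \<le> (\<Sum>i\<in>X. (d i)\<^sup>2)"
    using assms(1) by (intro sum_mono2) auto
  finally show ?thesis .
qed

lemma k_psd_form_eigenvalue_bound:
  fixes f :: "'a \<Rightarrow> 'a \<Rightarrow> real"
  assumes X: "finite X"
    and sym: "\<And>i j. i \<in> X \<Longrightarrow> j \<in> X \<Longrightarrow> f i j = f j i"
    and eig: "\<And>i. i \<in> X \<Longrightarrow> (\<Sum>j\<in>X. f i j * u j) = - lam * u i"
    and u_nz: "0 < (\<Sum>i\<in>X. (u i)\<^sup>2)"
    and psd: "\<And>S w. S \<subseteq> X \<Longrightarrow> card S = k \<Longrightarrow> 0 \<le> block_form f w S S"
    and diag: "(\<Sum>i\<in>X. (f i i)\<^sup>2) \<le> 1"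
    and n: "97 \<le> card X" and k: "3 * real (card X) / 4 \<le> real k" "k \<le> card X"
    and "0 < lam"
  shows "lam \<le> 96 * (real (card X) - real k) / real (card X) powr (3 / 2)"
proof -
  define n where "n = real (card X)"
  define \<tau> where "\<tau> = 2 / sqrt n"
  define h where "h = card {i \<in> X. \<tau> < f i i}"
  have n_pos: "0 < n" and \<tau>_nonneg: "0 \<le> \<tau>"
    using n unfolding n_def \<tau>_def by auto
  have "real h * \<tau>\<^sup>2 \<le> 1"
    using card_above_threshold_mult_sq_le[OF X \<tau>_nonneg, of "\<lambda>i. f i i"] diag
    unfolding h_def by linarith
  then have "4 * real h \<le> n"
    using n_pos unfolding \<tau>_def by (simp add: field_simps)
  then have "h + 2 \<le> k" and k_h: "n / 48 \<le> real k - real h - 1"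
    using k n unfolding n_def by linarith+
  have "n / 48 * lam \<le> (real k - real h - 1) * lam"
    using k_h \<open>0 < lam\<close> by (intro mult_right_mono) auto
  also have "\<dots> \<le> (n - real k) * \<tau>"
    using heavy_diagonal_eigenvalue_bound[OF X sym eig u_nz psd] \<open>h + 2 \<le> k\<close> \<open>0 < lam\<close>
      \<tau>_nonneg k(2) unfolding h_def n_def by auto
  finally have "lam * (n * sqrt n) \<le> 96 * (n - real k)"
    using n_pos unfolding \<tau>_def by (simp add: field_simps)
  moreover have "n powr (3 / 2) = n powr 1 * n powr (1 / 2)"
    by (subst powr_add[symmetric]) simp
  then have "n powr (3 / 2) = n * sqrt n"
    using n_pos by (simp add: powr_half_sqrt)
  ultimately show ?thesis
    using n_pos unfolding n_def by (simp add: field_simps)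
qed

lemma bij_betw_pick:
  assumes "finite S"
  shows "bij_betw (pick S) {..<card S} S"
proof -
  have "inj_on (pick S) {..<card S}"
    by (rule inj_onI) (metis card_pick_le lessThan_iff)
  moreover have "pick S ` {..<card S} \<subseteq> S"
    using pick_in_set_le by auto
  moreover have "card (pick S ` {..<card S}) = card S"
    using calculation(1) by (simp add: card_image)
  ultimately show ?thesis
    using assms by (simp add: bij_betw_def card_subset_eq)
qed

lemma psd_submatrix_block_form_nonneg:
  fixes M :: "real mat"
  assumes "M \<in> carrier_mat n n" "S \<subseteq> {..<n}" "psd_mat (submatrix M S S)"
  shows "0 \<le> block_form (\<lambda>i j. M $$ (i, j)) w S S"
proof -
  let ?c = "card S" and ?A = "submatrix M S S"
  have S_eq: "{i. i < n \<and> i \<in> S} = S" using assms(2) by auto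
  have fin: "finite S" using assms(2) finite_subset by blast
  have A_index: "?A $$ (a, b) = M $$ (pick S a, pick S b)" if "a < ?c" "b < ?c" for a b
    using that assms(1) S_eq by (simp add: submatrix_index)
  have A_dims: "dim_row ?A = ?c" "dim_col ?A = ?c"
    using assms(1) S_eq by (simp_all add: dim_submatrix)
  define x where "x = vec ?c (\<lambda>a. w (pick S a))"
  have "0 \<le> x \<bullet> (?A *\<^sub>v x)"
    using assms(3) A_dims unfolding psd_mat_def x_def by auto
  also have "x \<bullet> (?A *\<^sub>v x) = (\<Sum>a<?c. \<Sum>b<?c. w (pick S a) * M $$ (pick S a, pick S b) * w (pick S b))"
    using A_dims by (simp add: scalar_prod_def x_def A_index atLeast0LessThan sum_distrib_left mult_ac)
  also have "\<dots> = block_form (\<lambda>i j. M $$ (i, j)) w S S"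
    unfolding block_form_def
    by (simp add: sum.reindex_bij_betw[OF bij_betw_pick[OF fin], of "\<lambda>i. \<Sum>j\<in>S. w i * M $$ (i, j) * w j"]
        sum.reindex_bij_betw[OF bij_betw_pick[OF fin], of "\<lambda>j. w _ * M $$ (_, j) * w j"])
  finally show ?thesis .
qed

lemma eigenvector_row_sum:
  assumes "M \<in> carrier_mat n n" "eigenvector M v \<mu>" "i < n"
  shows "(\<Sum>j<n. M $$ (i, j) * v $ j) = \<mu> * v $ i"
proof -
  have v: "v \<in> carrier_vec n" "M *\<^sub>v v = \<mu> \<cdot>\<^sub>v v"
    using assms(1,2) unfolding eigenvector_def by auto
  have "(\<Sum>j<n. M $$ (i, j) * v $ j) = (M *\<^sub>v v) $ i"
    using assms(1,3) v(1) by (simp add: scalar_prod_def atLeast0LessThan)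
  also have "\<dots> = \<mu> * v $ i"
    using assms(3) v by simp
  finally show ?thesis .
qed

lemma eigenvector_sum_sq_pos:
  fixes v :: "real vec"
  assumes "M \<in> carrier_mat n n" "eigenvector M v \<mu>"
  shows "0 < (\<Sum>i<n. (v $ i)\<^sup>2)"
proof -
  have v: "v \<in> carrier_vec n" "v \<noteq> 0\<^sub>v n"
    using assms unfolding eigenvector_def by auto
  then obtain i where "i < n" "v $ i \<noteq> 0"
    by (metis carrier_vecD eq_vecI index_zero_vec(1,2))
  then have "0 < (v $ i)\<^sup>2" by simp
  also have "\<dots> \<le> (\<Sum>i<n. (v $ i)\<^sup>2)"
    using \<open>i < n\<close> by (intro member_le_sum) auto
  finally show ?thesis .
qed

lemma sum_sq_diag_le_frobenius_norm_sq:
  assumes "M \<in> carrier_mat n n"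
  shows "(\<Sum>i<n. (M $$ (i, i))\<^sup>2) \<le> (frobenius_norm M)\<^sup>2"
proof -
  have "(\<Sum>i<n. (M $$ (i, i))\<^sup>2) \<le> (\<Sum>i<n. \<Sum>j<n. (M $$ (i, j))\<^sup>2)"
    by (intro sum_mono member_le_sum[where f = "\<lambda>j. (M $$ (_, j))\<^sup>2"]) auto
  also have "\<dots> = (frobenius_norm M)\<^sup>2"
    using assms unfolding frobenius_norm_def by (simp add: sum_nonneg)
  finally show ?thesis .
qed

theorem lemma4:
  fixes n k :: nat and M :: "real mat" and lam1 :: real
  assumes "n \<ge> 97" and "3 * real n / 4 \<le> real k" and "k \<le> n"
    and "M \<in> k_psd_closure n k"
    and "frobenius_norm M = 1"
    and "\<not> psd_mat M"
    and "eigenvalue M (- lam1)"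
    and "\<forall>\<mu>. eigenvalue M \<mu> \<longrightarrow> - lam1 \<le> \<mu>"
    and "lam1 > 0"
  shows "lam1 \<le> 96 * (real n - real k) / real n powr (3 / 2)"
proof -
  have M: "M \<in> carrier_mat n n" "transpose_mat M = M"
    and psd: "\<And>S. S \<subseteq> {..<n} \<Longrightarrow> card S = k \<Longrightarrow> psd_mat (submatrix M S S)"
    using assms(4) unfolding k_psd_closure_def by (auto simp: atLeast0LessThan)
  obtain v where v: "eigenvector M v (- lam1)"
    using assms(7) unfolding eigenvalue_def by blast
  have sym: "M $$ (i, j) = M $$ (j, i)" if "i < n" "j < n" for i j
    using that M by (metis carrier_matD index_transpose_mat(1))
  have "lam1 \<le> 96 * (real (card {..<n}) - real k) / real (card {..<n}) powr (3 / 2)"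
  proof (rule k_psd_form_eigenvalue_bound[where f = "\<lambda>i j. M $$ (i, j)" and u = "\<lambda>i. v $ i"])
    show "(\<Sum>j\<in>{..<n}. M $$ (i, j) * v $ j) = - lam1 * v $ i" if "i \<in> {..<n}" for i
      using eigenvector_row_sum[OF M(1) v] that by simp
    show "0 \<le> block_form (\<lambda>i j. M $$ (i, j)) w S S" if "S \<subseteq> {..<n}" "card S = k" for S w
      using psd_submatrix_block_form_nonneg[OF M(1)] psd that by blast
    show "(\<Sum>i\<in>{..<n}. (M $$ (i, i))\<^sup>2) \<le> 1"
      using sum_sq_diag_le_frobenius_norm_sq[OF M(1)] assms(5) by simp
  qed (use assms sym eigenvector_sum_sq_pos[OF M(1) v] in auto)
  then show ?thesis by simp
qed

end
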